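(* Fix a binary instance $(\mu_0,\hat q)$. There exist a constant $c>0$ and a horizon $T_0$, depending only on $(\mu_0,\hat q)$, such that for every $T\ge T_0$ and every (possibly randomized) sender policy $\Pi$, $$\sup_{\alpha^\star\in[0,1]}\mathrm{Reg}_T(\Pi;\alpha^\star)\ge c\log\log T.$$
   Context: Binary model: states $\Omega=\{0,1\}$, actions $A=\{0,1\}$, prior $\mu_0=\Pr(\omega=1)\in(0,1)$, cutoff $\hat q\in(\mu_0,1)$, sender utility $u_S(a,\omega)=\mathbf 1\{a=1\}$. A receiver with fixed bias $\alpha^\star\in[0,1]$, unknown to the sender, takes action $1$ after Bayesian posterior $\nu=\Pr(\omega=1\mid s)$ iff $(1-\alpha^\star)\mu_0+\alpha^\star\nu\ge\hat q$. Over $T$ rounds, in each round $t$: - The sender commits to a Bayes-plausible distribution over posteriors (finitely supported on $[0,1]$ with mean $\mu_0$), chosen as a possibly randomized function of the history. - A state $\omega_t\sim\mu_0$ and a posterior $\nu_t$ are realized consistently with the committed distribution. - The receiver acts, and the sender observes the scheme, $\omega_t$, $\nu_t$ and the action. A sender policy $\Pi$ may depend on $(\mu_0,\hat q)$ and $T$ but not on $\alpha^\star$. Let $\mathrm{OPT}(\alpha^\star)$ be the supremum over Bayes-plausible distributions of the probability of inducing action $1$. The regret is $\mathrm{Reg}_T(\Pi;\alpha^\star)=T\cdot\mathrm{OPT}(\alpha^\star)-\sum_t\mathbb E[\Pr(\text{action }1\text{ in round }t\mid\text{history})]$. *)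

theory Defs
  imports "HOL-Probability.Probability"
begin

text \<open>States: True = (omega = 1), False = (omega = 0).  A signaling scheme is
  represented by its distribution over posteriors nu = Pr(omega = 1 | s).\<close>

definition bayes_plausible :: "real \<Rightarrow> real pmf \<Rightarrow> bool" where
  "bayes_plausible mu0 tau \<longleftrightarrow>
     finite (set_pmf tau) \<and> set_pmf tau \<subseteq> {0..1} \<and>
     measure_pmf.expectation tau (\<lambda>nu. nu) = mu0"

definition acts1 :: "real \<Rightarrow> real \<Rightarrow> real \<Rightarrow> real \<Rightarrow> bool" where
  "acts1 mu0 qhat alpha nu \<longleftrightarrow> (1 - alpha) * mu0 + alpha * nu \<ge> qhat"

text \<open>A history entry: (committed scheme, realized state, realized posterior, action).\<close>
type_synonym history = "(real pmf \<times> bool \<times> real \<times> bool) list"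

type_synonym policy = "history \<Rightarrow> real pmf pmf"

definition valid_policy :: "real \<Rightarrow> policy \<Rightarrow> bool" where
  "valid_policy mu0 Pol \<longleftrightarrow> (\<forall>h. \<forall>tau \<in> set_pmf (Pol h). bayes_plausible mu0 tau)"

fun hist_dist :: "real \<Rightarrow> real \<Rightarrow> real \<Rightarrow> policy \<Rightarrow> nat \<Rightarrow> history pmf" where
  "hist_dist mu0 qhat alpha Pol 0 = return_pmf []"
| "hist_dist mu0 qhat alpha Pol (Suc t) =
     bind_pmf (hist_dist mu0 qhat alpha Pol t) (\<lambda>h.
     bind_pmf (Pol h) (\<lambda>tau.
     bind_pmf tau (\<lambda>nu.
     bind_pmf (bernoulli_pmf nu) (\<lambda>omega.
     return_pmf (h @ [(tau, omega, nu, acts1 mu0 qhat alpha nu)])))))"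

definition OPT :: "real \<Rightarrow> real \<Rightarrow> real \<Rightarrow> real" where
  "OPT mu0 qhat alpha =
     Sup ((\<lambda>tau. measure_pmf.prob tau {nu. acts1 mu0 qhat alpha nu}) `
          {tau. bayes_plausible mu0 tau})"

text \<open>Expected probability of action 1 in round t (rounds t = 0..T-1),
  i.e. E[Pr(action 1 in round t | history)].\<close>
definition round_success :: "real \<Rightarrow> real \<Rightarrow> real \<Rightarrow> policy \<Rightarrow> nat \<Rightarrow> real" where
  "round_success mu0 qhat alpha Pol t =
     measure_pmf.expectation (hist_dist mu0 qhat alpha Pol t) (\<lambda>h.
       measure_pmf.expectation (Pol h) (\<lambda>tau.
         measure_pmf.prob tau {nu. acts1 mu0 qhat alpha nu}))"

definition regret :: "real \<Rightarrow> real \<Rightarrow> nat \<Rightarrow> policy \<Rightarrow> real \<Rightarrow> real" where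
  "regret mu0 qhat T Pol alpha =
     real T * OPT mu0 qhat alpha - (\<Sum>t<T. round_success mu0 qhat alpha Pol t)"

end

theory Submission
  imports Defs
begin

text \<open>Restrict the unknown bias to the N = T + 3 values for which the receiver takes action 1
  exactly when the posterior is at least th = qhat + i * dl (i < N), where N * dl is a small
  constant. Against the receiver with threshold th the sender loses, in every round, at least the
  surrogate loss E[nu - th; nu \<ge> th] + E[nu; nu < th], because OPT \<ge> mu0 / th.

  The posterior drawn in a round splits every block of consecutive thresholds into the thresholds
  below it, where the receiver acts, and those above it, where it does not; the history, and hence
  the rest of the play, depends on the threshold only through this bit. By induction on the number
  n of rounds, the surrogate losses of a block of m thresholds add up to at least m times the
  potential c * max 0 (ln ln (n + 3) - ln ln (1 / (m * dl))): the losses of one round pay both for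
  splitting the block and for the growth of the potential. For the block of all N thresholds the
  potential after T rounds is of order ln ln T, so one of the thresholds suffers that much regret.\<close>

section \<open>Expectations of bounded functions\<close>

lemma integrable_measure_pmf_bounded:
  fixes f :: "'a \<Rightarrow> real"
  assumes "\<And>x. x \<in> set_pmf M \<Longrightarrow> \<bar>f x\<bar> \<le> B"
  shows "integrable (measure_pmf M) f"
  by (rule measure_pmf.integrable_const_bound[where B = B]) (use assms in \<open>auto intro!: AE_pmfI\<close>)

lemma expectation_pmf_bounds:
  fixes f :: "'a \<Rightarrow> real"
  assumes "\<And>x. x \<in> set_pmf M \<Longrightarrow> lo \<le> f x" "\<And>x. x \<in> set_pmf M \<Longrightarrow> f x \<le> hi"
  shows "lo \<le> measure_pmf.expectation M f \<and> measure_pmf.expectation M f \<le> hi"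
proof -
  have "integrable (measure_pmf M) f"
    by (rule integrable_measure_pmf_bounded[where B = "\<bar>lo\<bar> + \<bar>hi\<bar>"]) (use assms in fastforce)
  then show ?thesis
    using measure_pmf.integral_ge_const[of M f lo] measure_pmf.integral_le_const[of M f hi] assms
    by (auto intro!: AE_pmfI)
qed

lemma abs_expectation_pmf_le:
  fixes f :: "'a \<Rightarrow> real"
  assumes "\<And>x. x \<in> set_pmf M \<Longrightarrow> \<bar>f x\<bar> \<le> B"
  shows "\<bar>measure_pmf.expectation M f\<bar> \<le> B"
  using expectation_pmf_bounds[of M "- B" f B] assms by (fastforce simp: abs_le_iff)

lemma integral_bind_pmf_bounded:
  fixes f :: "'b \<Rightarrow> real"
  assumes bound: "\<And>y. y \<in> set_pmf (bind_pmf M N) \<Longrightarrow> \<bar>f y\<bar> \<le> B"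
  shows "measure_pmf.expectation (bind_pmf M N) f =
         measure_pmf.expectation M (\<lambda>x. measure_pmf.expectation (N x) f)"
proof -
  define g where "g y = (if y \<in> set_pmf (bind_pmf M N) then f y else 0)" for y
  have g_bound: "\<bar>g y\<bar> \<le> \<bar>B\<bar>" for y
    using bound[of y] unfolding g_def by (auto simp del: set_bind_pmf)
  have "measure_pmf.expectation (bind_pmf M N) f = measure_pmf.expectation (bind_pmf M N) g"
    by (intro integral_cong_AE) (auto simp: g_def intro!: AE_pmfI)
  also have "\<dots> = measure_pmf.expectation M (\<lambda>x. measure_pmf.expectation (N x) g)"
    unfolding measure_pmf_bind
    by (rule integral_bind[where K = "count_space UNIV" and B = "\<bar>B\<bar>" and B' = 1])
      (use g_bound in \<open>auto simp: space_subprob_algebra prob_space_imp_subprob_space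
        prob_space_measure_pmf\<close>)
  also have "\<dots> = measure_pmf.expectation M (\<lambda>x. measure_pmf.expectation (N x) f)"
    by (intro integral_cong_AE AE_pmfI) (auto simp: g_def intro!: AE_pmfI)
  finally show ?thesis .
qed

section \<open>Unrolling the first round\<close>

definition policy_after :: "policy \<Rightarrow> real pmf \<times> bool \<times> real \<times> bool \<Rightarrow> policy" where
  "policy_after Pol e = (\<lambda>h. Pol (e # h))"

lemma valid_policy_after: "valid_policy mu0 Pol \<Longrightarrow> valid_policy mu0 (policy_after Pol e)"
  by (auto simp: valid_policy_def policy_after_def)

text \<open>The first entry of the history without the action, which is the only part of it that
  depends on the bias.\<close>
definition first_signal :: "policy \<Rightarrow> (real pmf \<times> bool \<times> real) pmf" where
  "first_signal Pol =
     bind_pmf (Pol []) (\<lambda>tau. bind_pmf tau (\<lambda>nu.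
       map_pmf (\<lambda>omega. (tau, omega, nu)) (bernoulli_pmf nu)))"

lemma hist_dist_Suc_first:
  "hist_dist mu0 qhat alpha Pol (Suc t) =
     bind_pmf (first_signal Pol) (\<lambda>(tau, omega, nu).
       map_pmf ((#) (tau, omega, nu, acts1 mu0 qhat alpha nu))
         (hist_dist mu0 qhat alpha (policy_after Pol (tau, omega, nu, acts1 mu0 qhat alpha nu)) t))"
proof (induction t arbitrary: Pol)
  case 0
  then show ?case
    by (simp add: first_signal_def bind_assoc_pmf bind_return_pmf map_pmf_def)
next
  case (Suc t)
  show ?case
    by (subst hist_dist.simps(2), subst Suc)
      (simp add: first_signal_def policy_after_def bind_assoc_pmf bind_map_pmf map_bind_pmf
        bind_return_pmf map_pmf_def)
qed

lemma posterior_in_unit: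
  "valid_policy mu0 Pol \<Longrightarrow> tau \<in> set_pmf (Pol h) \<Longrightarrow> nu \<in> set_pmf tau \<Longrightarrow> 0 \<le> nu \<and> nu \<le> 1"
  unfolding valid_policy_def bayes_plausible_def by (meson atLeastAtMost_iff subsetD)

lemma set_pmf_first_signal:
  "(tau, omega, nu) \<in> set_pmf (first_signal Pol) \<longleftrightarrow>
     tau \<in> set_pmf (Pol []) \<and> nu \<in> set_pmf tau \<and> omega \<in> set_pmf (bernoulli_pmf nu)"
  by (auto simp: first_signal_def)

lemma first_signal_posterior_in_unit:
  "valid_policy mu0 Pol \<Longrightarrow> (tau, omega, nu) \<in> set_pmf (first_signal Pol) \<Longrightarrow> 0 \<le> nu \<and> nu \<le> 1"
  by (auto simp: set_pmf_first_signal dest: posterior_in_unit)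

lemma expectation_first_signal:
  fixes f :: "real pmf \<times> bool \<times> real \<Rightarrow> real"
  assumes "\<And>s. s \<in> set_pmf (first_signal Pol) \<Longrightarrow> \<bar>f s\<bar> \<le> B"
  shows "measure_pmf.expectation (first_signal Pol) f =
         measure_pmf.expectation (Pol []) (\<lambda>tau. measure_pmf.expectation tau (\<lambda>nu.
           measure_pmf.expectation (bernoulli_pmf nu) (\<lambda>omega. f (tau, omega, nu))))"
proof -
  have "measure_pmf.expectation (first_signal Pol) f =
        measure_pmf.expectation (Pol []) (\<lambda>tau. measure_pmf.expectation
          (bind_pmf tau (\<lambda>nu. map_pmf (\<lambda>omega. (tau, omega, nu)) (bernoulli_pmf nu))) f)"
    unfolding first_signal_def by (rule integral_bind_pmf_bounded)
      (use assms in \<open>simp add: first_signal_def\<close>)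
  also have "\<dots> = measure_pmf.expectation (Pol []) (\<lambda>tau. measure_pmf.expectation tau (\<lambda>nu.
           measure_pmf.expectation (bernoulli_pmf nu) (\<lambda>omega. f (tau, omega, nu))))"
  proof (intro integral_cong_AE AE_pmfI)
    fix tau assume "tau \<in> set_pmf (Pol [])"
    then have "\<bar>f (tau, omega, nu)\<bar> \<le> B"
      if "nu \<in> set_pmf tau" "omega \<in> set_pmf (bernoulli_pmf nu)" for omega nu
      using assms that set_pmf_first_signal by blast
    then show "measure_pmf.expectation
          (bind_pmf tau (\<lambda>nu. map_pmf (\<lambda>omega. (tau, omega, nu)) (bernoulli_pmf nu))) f =
        measure_pmf.expectation tau (\<lambda>nu.
          measure_pmf.expectation (bernoulli_pmf nu) (\<lambda>omega. f (tau, omega, nu)))"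
      by (subst integral_bind_pmf_bounded[where B = B]) auto
  qed simp_all
  finally show ?thesis .
qed

lemma expectation_first_signal_posterior:
  assumes "valid_policy mu0 Pol"
  shows "measure_pmf.expectation (first_signal Pol) (\<lambda>s. snd (snd s)) = mu0"
proof -
  have "measure_pmf.expectation (first_signal Pol) (\<lambda>s. snd (snd s)) =
        measure_pmf.expectation (Pol []) (\<lambda>tau. measure_pmf.expectation tau (\<lambda>nu. nu))"
    by (subst expectation_first_signal[where B = 1])
      (use first_signal_posterior_in_unit[OF assms] in auto)
  also have "\<dots> = measure_pmf.expectation (Pol []) (\<lambda>tau. mu0)"
    using assms by (intro integral_cong_AE AE_pmfI) (auto simp: valid_policy_def bayes_plausible_def)
  finally show ?thesis by simp
qed

lemma expectation_first_signal_ge_linear: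
  fixes G :: "real pmf \<times> bool \<times> real \<Rightarrow> real"
  assumes valid: "valid_policy mu0 Pol"
    and lower: "\<And>tau omega nu. (tau, omega, nu) \<in> set_pmf (first_signal Pol) \<Longrightarrow>
      a + b * nu \<le> G (tau, omega, nu)"
    and bound: "\<And>s. s \<in> set_pmf (first_signal Pol) \<Longrightarrow> \<bar>G s\<bar> \<le> B"
  shows "a + b * mu0 \<le> measure_pmf.expectation (first_signal Pol) G"
proof -
  have nu_integrable: "integrable (first_signal Pol) (\<lambda>s. snd (snd s))"
    by (rule integrable_measure_pmf_bounded[where B = 1])
      (use first_signal_posterior_in_unit[OF valid] in force)
  have "a + b * mu0 = measure_pmf.expectation (first_signal Pol) (\<lambda>s. a + b * snd (snd s))"
    using nu_integrable expectation_first_signal_posterior[OF valid] by simp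
  also have "\<dots> \<le> measure_pmf.expectation (first_signal Pol) G"
  proof (rule integral_mono_AE)
    show "integrable (first_signal Pol) (\<lambda>s. a + b * snd (snd s))"
      using nu_integrable by simp
    show "integrable (first_signal Pol) G"
      by (rule integrable_measure_pmf_bounded) (rule bound)
    show "AE s in first_signal Pol. a + b * snd (snd s) \<le> G s"
      using lower by (auto intro!: AE_pmfI)
  qed
  finally show ?thesis .
qed

lemma expectation_hist_dist_Suc:
  fixes f :: "history \<Rightarrow> real"
  assumes "\<And>h. \<bar>f h\<bar> \<le> B"
  shows "measure_pmf.expectation (hist_dist mu0 qhat alpha Pol (Suc t)) f =
         measure_pmf.expectation (first_signal Pol) (\<lambda>(tau, omega, nu).
           measure_pmf.expectation
             (hist_dist mu0 qhat alpha (policy_after Pol (tau, omega, nu, acts1 mu0 qhat alpha nu)) t)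
             (\<lambda>h. f ((tau, omega, nu, acts1 mu0 qhat alpha nu) # h)))"
  unfolding hist_dist_Suc_first
  by (subst integral_bind_pmf_bounded[where B = B]) (simp_all add: assms case_prod_unfold)

section \<open>Threshold receivers and the surrogate loss\<close>

definition threshold_bias :: "real \<Rightarrow> real \<Rightarrow> real \<Rightarrow> real" where
  "threshold_bias mu0 qhat th = (qhat - mu0) / (th - mu0)"

lemma acts1_threshold_bias_iff:
  assumes "mu0 < qhat" "qhat \<le> th"
  shows "acts1 mu0 qhat (threshold_bias mu0 qhat th) nu \<longleftrightarrow> th \<le> nu"
proof -
  define alpha where "alpha = threshold_bias mu0 qhat th"
  have "alpha > 0" and "alpha * (th - mu0) = qhat - mu0"
    using assms by (simp_all add: alpha_def threshold_bias_def)
  then have "(1 - alpha) * mu0 + alpha * nu - qhat = alpha * (nu - th)"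
    by (simp add: algebra_simps)
  with \<open>alpha > 0\<close> show ?thesis
    unfolding acts1_def alpha_def[symmetric] by (smt (verit) zero_le_mult_iff)
qed

lemma threshold_bias_in_unit: "mu0 < qhat \<Longrightarrow> qhat \<le> th \<Longrightarrow> threshold_bias mu0 qhat th \<in> {0..1}"
  by (simp add: threshold_bias_def divide_le_eq)

lemma prob_acts1_le_OPT:
  assumes "bayes_plausible mu0 tau"
  shows "measure_pmf.prob tau {nu. acts1 mu0 qhat alpha nu} \<le> OPT mu0 qhat alpha"
  unfolding OPT_def
  by (rule cSup_upper) (use assms in \<open>auto intro!: bdd_aboveI[where M = 1] simp: measure_pmf.prob_le_1\<close>)

lemma OPT_bounds:
  assumes "0 \<le> mu0" "mu0 \<le> 1"
  shows "0 \<le> OPT mu0 qhat alpha \<and> OPT mu0 qhat alpha \<le> 1"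
proof
  have "bayes_plausible mu0 (return_pmf mu0)"
    using assms by (simp add: bayes_plausible_def)
  then show "0 \<le> OPT mu0 qhat alpha"
    using prob_acts1_le_OPT measure_nonneg order_trans by blast
  show "OPT mu0 qhat alpha \<le> 1"
    unfolding OPT_def using \<open>bayes_plausible mu0 (return_pmf mu0)\<close>
    by (intro cSup_least) (auto simp: measure_pmf.prob_le_1)
qed

text \<open>Against a threshold receiver the sender can split the prior into the posteriors 0 and th.\<close>
lemma OPT_threshold_bias_ge:
  assumes "0 < mu0" "mu0 < qhat" "qhat \<le> th" "th \<le> 1"
  shows "mu0 / th \<le> OPT mu0 qhat (threshold_bias mu0 qhat th)"
proof -
  define tau where "tau = map_pmf (\<lambda>b. if b then th else 0) (bernoulli_pmf (mu0 / th))"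
  have p: "0 \<le> mu0 / th" "mu0 / th \<le> 1"
    using assms by (auto simp: divide_le_eq)
  have "(\<lambda>b. if b then th else 0) -` {nu. th \<le> nu} = {True}"
    using assms by auto
  then have "mu0 / th = measure_pmf.prob tau {nu. acts1 mu0 qhat (threshold_bias mu0 qhat th) nu}"
    using p by (simp add: tau_def acts1_threshold_bias_iff[OF assms(2,3)] measure_pmf_single)
  also have "\<dots> \<le> OPT mu0 qhat (threshold_bias mu0 qhat th)"
    using assms p by (intro prob_acts1_le_OPT) (auto simp: bayes_plausible_def tau_def)
  finally show ?thesis .
qed

definition surrogate_loss :: "real \<Rightarrow> real \<Rightarrow> real" where
  "surrogate_loss th nu = (if th \<le> nu then nu - th else nu)"

lemma surrogate_loss_bounds:
  "0 \<le> th \<Longrightarrow> th \<le> 1 \<Longrightarrow> 0 \<le> nu \<Longrightarrow> nu \<le> 1 \<Longrightarrow> 0 \<le> surrogate_loss th nu \<and> surrogate_loss th nu \<le> 1"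
  by (auto simp: surrogate_loss_def)

definition cumulative_surrogate_loss :: "real \<Rightarrow> real \<Rightarrow> real \<Rightarrow> policy \<Rightarrow> real \<Rightarrow> nat \<Rightarrow> real" where
  "cumulative_surrogate_loss mu0 qhat alpha Pol th n =
     (\<Sum>t<n. measure_pmf.expectation (hist_dist mu0 qhat alpha Pol t) (\<lambda>h.
       measure_pmf.expectation (Pol h) (\<lambda>tau. measure_pmf.expectation tau (surrogate_loss th))))"

lemma round_surrogate_loss_bounds:
  assumes "valid_policy mu0 Pol" "0 \<le> th" "th \<le> 1"
  shows "0 \<le> measure_pmf.expectation (Pol h) (\<lambda>tau. measure_pmf.expectation tau (surrogate_loss th)) \<and>
         measure_pmf.expectation (Pol h) (\<lambda>tau. measure_pmf.expectation tau (surrogate_loss th)) \<le> 1"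
  using assms by (intro expectation_pmf_bounds)
    (metis expectation_pmf_bounds posterior_in_unit surrogate_loss_bounds)+

lemma cumulative_surrogate_loss_bounds:
  assumes "valid_policy mu0 Pol" "0 \<le> th" "th \<le> 1"
  shows "0 \<le> cumulative_surrogate_loss mu0 qhat alpha Pol th n \<and>
         cumulative_surrogate_loss mu0 qhat alpha Pol th n \<le> n"
proof -
  define round_loss where "round_loss t = measure_pmf.expectation (hist_dist mu0 qhat alpha Pol t) (\<lambda>h.
      measure_pmf.expectation (Pol h) (\<lambda>tau. measure_pmf.expectation tau (surrogate_loss th)))" for t
  have round_loss_bounds: "0 \<le> round_loss t \<and> round_loss t \<le> 1" for t
    unfolding round_loss_def using round_surrogate_loss_bounds[OF assms]
    by (intro expectation_pmf_bounds) auto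
  have "(\<Sum>t<n. round_loss t) \<le> (\<Sum>t<n. 1)"
    by (rule sum_mono) (use round_loss_bounds in blast)
  moreover have "0 \<le> (\<Sum>t<n. round_loss t)"
    by (rule sum_nonneg) (use round_loss_bounds in blast)
  ultimately show ?thesis
    unfolding cumulative_surrogate_loss_def round_loss_def by simp
qed

lemma cumulative_surrogate_loss_Suc:
  assumes valid: "valid_policy mu0 Pol" and th: "0 \<le> th" "th \<le> 1"
  shows "cumulative_surrogate_loss mu0 qhat alpha Pol th (Suc n) =
    measure_pmf.expectation (first_signal Pol) (\<lambda>(tau, omega, nu). surrogate_loss th nu +
      cumulative_surrogate_loss mu0 qhat alpha
        (policy_after Pol (tau, omega, nu, acts1 mu0 qhat alpha nu)) th n)"
proof -
  define loss where
    "loss P h = measure_pmf.expectation (P h) (\<lambda>tau. measure_pmf.expectation tau (surrogate_loss th))"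
    for P :: policy and h
  define later where "later t = (\<lambda>(tau, omega, nu). measure_pmf.expectation
      (hist_dist mu0 qhat alpha (policy_after Pol (tau, omega, nu, acts1 mu0 qhat alpha nu)) t)
      (loss (policy_after Pol (tau, omega, nu, acts1 mu0 qhat alpha nu))))" for t
  have loss_bounds: "0 \<le> loss P h \<and> loss P h \<le> 1" if "valid_policy mu0 P" for P h
    unfolding loss_def by (rule round_surrogate_loss_bounds[OF that th])
  have later_bounds: "0 \<le> later t s \<and> later t s \<le> 1" for t s
    unfolding later_def case_prod_unfold
    by (rule expectation_pmf_bounds) (use loss_bounds[OF valid_policy_after[OF valid]] in auto)
  have loss_in_unit: "\<And>s. s \<in> set_pmf (first_signal Pol) \<Longrightarrow> \<bar>surrogate_loss th (snd (snd s))\<bar> \<le> 1"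
    using first_signal_posterior_in_unit[OF valid] surrogate_loss_bounds[OF th] by force
  have first_round:
    "loss Pol [] = measure_pmf.expectation (first_signal Pol) (\<lambda>s. surrogate_loss th (snd (snd s)))"
    unfolding loss_def by (subst expectation_first_signal[OF loss_in_unit]) simp_all
  have loss_after: "loss Pol (e # h) = loss (policy_after Pol e) h" for e h
    by (simp add: loss_def policy_after_def)
  have later_rounds: "measure_pmf.expectation (hist_dist mu0 qhat alpha Pol (Suc t)) (loss Pol) =
      measure_pmf.expectation (first_signal Pol) (later t)" for t
    unfolding later_def
    by (subst expectation_hist_dist_Suc[where B = 1])
      (simp_all add: loss_after abs_le_iff loss_bounds[OF valid])
  have "cumulative_surrogate_loss mu0 qhat alpha Pol th (Suc n) =
        loss Pol [] + (\<Sum>t<n. measure_pmf.expectation (hist_dist mu0 qhat alpha Pol (Suc t)) (loss Pol))"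
    unfolding cumulative_surrogate_loss_def loss_def
    by (subst sum.lessThan_Suc_shift) (simp del: hist_dist.simps(2))
  also have "\<dots> = measure_pmf.expectation (first_signal Pol)
      (\<lambda>s. surrogate_loss th (snd (snd s)) + (\<Sum>t<n. later t s))"
    using loss_in_unit later_bounds
    by (simp add: first_round later_rounds integrable_measure_pmf_bounded[where B = 1] abs_le_iff
          Bochner_Integration.integral_sum del: hist_dist.simps(2))
  finally show ?thesis
    unfolding later_def loss_def cumulative_surrogate_loss_def by (simp add: case_prod_unfold)
qed

definition surrogate_loss_given_first_signal ::
  "real \<Rightarrow> real \<Rightarrow> real \<Rightarrow> policy \<Rightarrow> nat \<Rightarrow> real pmf \<times> bool \<times> real \<Rightarrow> real" where
  "surrogate_loss_given_first_signal mu0 qhat th Pol n = (\<lambda>(tau, omega, nu). surrogate_loss th nu +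
     cumulative_surrogate_loss mu0 qhat (threshold_bias mu0 qhat th)
       (policy_after Pol (tau, omega, nu, th \<le> nu)) th n)"

lemma surrogate_loss_given_first_signal_bounds:
  assumes "valid_policy mu0 Pol" "0 \<le> th" "th \<le> 1" "s \<in> set_pmf (first_signal Pol)"
  shows "0 \<le> surrogate_loss_given_first_signal mu0 qhat th Pol n s \<and>
         surrogate_loss_given_first_signal mu0 qhat th Pol n s \<le> real n + 1"
proof -
  obtain tau omega nu where s: "s = (tau, omega, nu)"
    by (cases s)
  then have "0 \<le> surrogate_loss th nu \<and> surrogate_loss th nu \<le> 1"
    using assms first_signal_posterior_in_unit[OF assms(1)] surrogate_loss_bounds by blast
  moreover have "0 \<le> cumulative_surrogate_loss mu0 qhat (threshold_bias mu0 qhat th)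
      (policy_after Pol (tau, omega, nu, th \<le> nu)) th n \<and>
    cumulative_surrogate_loss mu0 qhat (threshold_bias mu0 qhat th)
      (policy_after Pol (tau, omega, nu, th \<le> nu)) th n \<le> real n"
    using cumulative_surrogate_loss_bounds[OF valid_policy_after[OF assms(1)] assms(2,3)] by blast
  ultimately show ?thesis
    by (simp add: s surrogate_loss_given_first_signal_def)
qed

lemma sum_cumulative_surrogate_loss_Suc:
  assumes valid: "valid_policy mu0 Pol" and mu0: "0 < mu0" "mu0 < qhat"
    and th: "\<And>i. i \<in> I \<Longrightarrow> qhat \<le> th i \<and> th i \<le> 1" and "finite I"
  shows "(\<Sum>i\<in>I. cumulative_surrogate_loss mu0 qhat (threshold_bias mu0 qhat (th i)) Pol (th i) (Suc n)) =
    measure_pmf.expectation (first_signal Pol)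
      (\<lambda>s. \<Sum>i\<in>I. surrogate_loss_given_first_signal mu0 qhat (th i) Pol n s)"
proof -
  have th01: "0 \<le> th i" "th i \<le> 1" if "i \<in> I" for i
    using th[OF that] mu0 by auto
  have "cumulative_surrogate_loss mu0 qhat (threshold_bias mu0 qhat (th i)) Pol (th i) (Suc n) =
      measure_pmf.expectation (first_signal Pol) (surrogate_loss_given_first_signal mu0 qhat (th i) Pol n)"
    if "i \<in> I" for i
    using cumulative_surrogate_loss_Suc[OF valid th01[OF that]] th[OF that] mu0
    by (simp add: surrogate_loss_given_first_signal_def acts1_threshold_bias_iff)
  moreover have "integrable (first_signal Pol) (surrogate_loss_given_first_signal mu0 qhat (th i) Pol n)"
    if "i \<in> I" for i
    using surrogate_loss_given_first_signal_bounds[OF valid th01[OF that]]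
    by (intro integrable_measure_pmf_bounded[where B = "real n + 1"]) (force simp: abs_le_iff)
  ultimately show ?thesis
    using \<open>finite I\<close> by (simp add: Bochner_Integration.integral_sum)
qed

lemma expectation_surrogate_loss:
  assumes "bayes_plausible mu0 tau"
  shows "measure_pmf.expectation tau (surrogate_loss th) =
    mu0 - th * measure_pmf.prob tau {nu. th \<le> nu}"
proof -
  have finite: "finite (set_pmf tau)"
    using assms by (simp add: bayes_plausible_def)
  have "measure_pmf.expectation tau (surrogate_loss th) =
        measure_pmf.expectation tau (\<lambda>nu. nu - th * indicator {nu. th \<le> nu} nu)"
    by (rule arg_cong[where f = "measure_pmf.expectation tau"])
      (auto simp: surrogate_loss_def indicator_def)
  also have "\<dots> = mu0 - th * measure_pmf.prob tau {nu. th \<le> nu}"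
    using assms finite by (simp add: bayes_plausible_def integrable_measure_pmf_finite)
  finally show ?thesis .
qed

lemma surrogate_loss_le_scheme_regret:
  assumes mu0: "0 < mu0" "mu0 < qhat" and th: "qhat \<le> th" "th \<le> 1" and bp: "bayes_plausible mu0 tau"
  shows "measure_pmf.expectation tau (surrogate_loss th) \<le>
     OPT mu0 qhat (threshold_bias mu0 qhat th) -
     measure_pmf.prob tau {nu. acts1 mu0 qhat (threshold_bias mu0 qhat th) nu}"
proof -
  define P where "P = measure_pmf.prob tau {nu. th \<le> nu}"
  have nonneg: "0 \<le> mu0 - th * P"
    using expectation_surrogate_loss[OF bp, of th] expectation_pmf_bounds[of tau 0 "surrogate_loss th" 1]
      surrogate_loss_bounds[of th] bp mu0 th
    by (force simp: P_def bayes_plausible_def)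
  have "mu0 - th * P \<le> (mu0 - th * P) / th"
    using nonneg mu0 th by (simp add: le_divide_eq mult_left_le)
  also have "\<dots> = mu0 / th - P"
    using mu0 th by (simp add: field_simps)
  also have "\<dots> \<le> OPT mu0 qhat (threshold_bias mu0 qhat th) - P"
    using OPT_threshold_bias_ge[OF mu0 th] by simp
  finally show ?thesis
    using expectation_surrogate_loss[OF bp] acts1_threshold_bias_iff[OF mu0(2) th(1)]
    by (simp add: P_def)
qed

lemma surrogate_loss_le_round_regret:
  assumes mu0: "0 < mu0" "mu0 < qhat" and th: "qhat \<le> th" "th \<le> 1" and valid: "valid_policy mu0 Pol"
  shows "measure_pmf.expectation (Pol h) (\<lambda>tau. measure_pmf.expectation tau (surrogate_loss th)) \<le>
    OPT mu0 qhat (threshold_bias mu0 qhat th) -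
    measure_pmf.expectation (Pol h)
      (\<lambda>tau. measure_pmf.prob tau {nu. acts1 mu0 qhat (threshold_bias mu0 qhat th) nu})"
proof -
  define opt where "opt = OPT mu0 qhat (threshold_bias mu0 qhat th)"
  define success where
    "success tau = measure_pmf.prob tau {nu. acts1 mu0 qhat (threshold_bias mu0 qhat th) nu}"
    for tau
  have opt: "0 \<le> opt" "opt \<le> 1"
    using OPT_bounds[of mu0] mu0 th by (simp_all add: opt_def)
  have success: "0 \<le> success tau" "success tau \<le> 1" for tau
    by (simp_all add: success_def)
  have "measure_pmf.expectation (Pol h) (\<lambda>tau. measure_pmf.expectation tau (surrogate_loss th)) \<le>
      measure_pmf.expectation (Pol h) (\<lambda>tau. opt - success tau)"
  proof (intro integral_mono_AE AE_pmfI integrable_measure_pmf_bounded)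
    fix tau assume tau: "tau \<in> set_pmf (Pol h)"
    show "measure_pmf.expectation tau (surrogate_loss th) \<le> opt - success tau"
      using valid tau surrogate_loss_le_scheme_regret[OF mu0 th]
      by (simp add: valid_policy_def opt_def success_def)
    show "\<bar>measure_pmf.expectation tau (surrogate_loss th)\<bar> \<le> 1"
      using valid tau mu0 th surrogate_loss_bounds[of th]
      by (intro abs_expectation_pmf_le) (force dest: posterior_in_unit)
    show "\<bar>opt - success tau\<bar> \<le> 1"
      using opt success[of tau] by simp
  qed
  also have "\<dots> = opt - measure_pmf.expectation (Pol h) success"
    using success by (simp add: integrable_measure_pmf_bounded[where B = 1])
  finally show ?thesis
    by (simp add: opt_def success_def[abs_def])
qed

lemma regret_ge_cumulative_surrogate_loss:
  assumes mu0: "0 < mu0" "mu0 < qhat" and th: "qhat \<le> th" "th \<le> 1" and valid: "valid_policy mu0 Pol"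
  shows "cumulative_surrogate_loss mu0 qhat (threshold_bias mu0 qhat th) Pol th T \<le>
         regret mu0 qhat T Pol (threshold_bias mu0 qhat th)"
proof -
  define alpha where "alpha = threshold_bias mu0 qhat th"
  define opt where "opt = OPT mu0 qhat alpha"
  define success where "success h = measure_pmf.expectation (Pol h) (\<lambda>tau.
      measure_pmf.prob tau {nu. acts1 mu0 qhat alpha nu})" for h
  define loss where "loss h = measure_pmf.expectation (Pol h) (\<lambda>tau.
      measure_pmf.expectation tau (surrogate_loss th))" for h
  have opt: "0 \<le> opt" "opt \<le> 1"
    using OPT_bounds[of mu0] mu0 th by (simp_all add: opt_def)
  have success: "\<bar>success h\<bar> \<le> 1" for h
    unfolding success_def by (intro abs_expectation_pmf_le) simp
  have loss: "\<bar>loss h\<bar> \<le> 1" for h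
    using round_surrogate_loss_bounds[OF valid, of th h] mu0 th by (simp add: loss_def)
  have per_round: "measure_pmf.expectation (hist_dist mu0 qhat alpha Pol t) loss \<le>
      opt - round_success mu0 qhat alpha Pol t" for t
  proof -
    have "measure_pmf.expectation (hist_dist mu0 qhat alpha Pol t) loss \<le>
          measure_pmf.expectation (hist_dist mu0 qhat alpha Pol t) (\<lambda>h. opt - success h)"
    proof (rule integral_mono)
      show "integrable (hist_dist mu0 qhat alpha Pol t) loss"
        by (rule integrable_measure_pmf_bounded) (rule loss)
      show "integrable (hist_dist mu0 qhat alpha Pol t) (\<lambda>h. opt - success h)"
        by (rule integrable_measure_pmf_bounded[where B = 2]) (use opt success in \<open>smt (verit)\<close>)
      show "loss h \<le> opt - success h" for h
        using surrogate_loss_le_round_regret[OF mu0 th valid]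
        by (simp add: loss_def opt_def success_def alpha_def)
    qed
    also have "\<dots> = opt - round_success mu0 qhat alpha Pol t"
      using success
      by (simp add: round_success_def success_def[abs_def] integrable_measure_pmf_bounded[where B = 1])
    finally show ?thesis .
  qed
  have "cumulative_surrogate_loss mu0 qhat alpha Pol th T \<le>
      (\<Sum>t<T. opt - round_success mu0 qhat alpha Pol t)"
    unfolding cumulative_surrogate_loss_def loss_def[symmetric] by (intro sum_mono per_round)
  also have "\<dots> = regret mu0 qhat T Pol alpha"
    by (simp add: regret_def opt_def sum_subtractf)
  finally show ?thesis
    by (simp add: alpha_def)
qed

lemma regret_le:
  assumes "0 \<le> mu0" "mu0 \<le> 1"
  shows "regret mu0 qhat T Pol alpha \<le> real T"
proof -
  have "0 \<le> round_success mu0 qhat alpha Pol t" for t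
    unfolding round_success_def by (intro integral_nonneg_AE AE_pmfI) simp
  then have "0 \<le> (\<Sum>t<T. round_success mu0 qhat alpha Pol t)"
    by (intro sum_nonneg) auto
  moreover have "real T * OPT mu0 qhat alpha \<le> real T"
    using OPT_bounds[OF assms] by (simp add: mult_left_le)
  ultimately show ?thesis
    unfolding regret_def by linarith
qed

section \<open>The potential\<close>

lemma ln_le_sqrt:
  assumes "1 \<le> y"
  shows "ln y \<le> sqrt y"
proof -
  have pos: "0 < sqrt y"
    using assms by simp
  have "ln (sqrt y / 2) \<le> sqrt y / 2 - 1"
    using pos by (intro ln_le_minus_one) simp
  moreover have "ln (2::real) \<le> 1"
    using ln_le_minus_one[of 2] by simp
  ultimately have "ln (sqrt y) \<le> sqrt y / 2"
    using pos by (simp add: ln_div)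
  then show ?thesis
    using assms by (simp add: ln_sqrt)
qed

lemma one_le_ln_inverse:
  fixes w :: real
  assumes "0 < w" "w \<le> 1/3"
  shows "1 \<le> ln (1 / w)"
proof -
  have "exp 1 * w \<le> 3 * w"
    using exp_le assms(1) by (intro mult_right_mono) auto
  then have "exp 1 * w \<le> 1"
    using assms(2) by linarith
  then have "exp 1 \<le> 1 / w"
    using assms(1) by (simp add: le_divide_eq)
  then show ?thesis
    using assms by (simp add: ln_ge_iff)
qed

lemma ln_ln_mono:
  fixes x y :: real
  assumes "1 < x" "x \<le> y"
  shows "ln (ln x) \<le> ln (ln y)"
  using assms by simp

lemma ln_ln_diff_le:
  fixes x y :: real
  assumes "1 < x" "x \<le> y"
  shows "ln (ln y) - ln (ln x) \<le> ln (y / x) / ln x"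
proof -
  have lnx: "0 < ln x" and lnxy: "ln x \<le> ln y"
    using assms by simp_all
  have "ln (ln y) - ln (ln x) = ln (ln y / ln x)"
    using lnx lnxy by (simp add: ln_div)
  also have "\<dots> \<le> ln y / ln x - 1"
    using lnx lnxy by (intro ln_le_minus_one) simp
  also have "\<dots> = ln (y / x) / ln x"
    using lnx assms by (simp add: ln_div field_simps)
  finally show ?thesis .
qed

lemma ln_ln_add_one_diff_le:
  fixes x :: real
  assumes "3 \<le> x"
  shows "ln (ln (x + 1)) - ln (ln x) \<le> 1 / x"
proof -
  have "1 \<le> ln x"
    using one_le_ln_inverse[of "1 / x"] assms by simp
  moreover have "0 \<le> ln ((x + 1) / x)"
    using assms by simp
  ultimately have "ln ((x + 1) / x) / ln x \<le> ln ((x + 1) / x)"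
    by (simp add: divide_le_eq mult_le_cancel_left1)
  moreover have "ln ((x + 1) / x) \<le> 1 / x"
    using ln_le_minus_one[of "(x + 1) / x"] assms by (simp add: field_simps)
  ultimately show ?thesis
    using ln_ln_diff_le[of x "x + 1"] assms by simp
qed

definition potential :: "real \<Rightarrow> real \<Rightarrow> nat \<Rightarrow> nat \<Rightarrow> real" where
  "potential c dl m n = c * max 0 (ln (ln (real n + 3)) - ln (ln (1 / (real m * dl))))"

lemma potential_nonneg: "0 \<le> c \<Longrightarrow> 0 \<le> potential c dl m n"
  by (simp add: potential_def)

lemma potential_mono:
  assumes "0 \<le> c" "n \<le> n'"
  shows "potential c dl m n \<le> potential c dl m n'"
  unfolding potential_def using assms by (intro mult_left_mono max.mono) auto

lemma potential_0:
  assumes "1 \<le> m" "0 < dl" "real m * dl \<le> 1/3"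
  shows "potential c dl m 0 = 0"
proof -
  have "3 \<le> 1 / (real m * dl)"
    using assms by (simp add: le_divide_eq)
  then show ?thesis
    unfolding potential_def by (simp add: ln_ln_mono)
qed

lemma potential_diff_le:
  fixes k m :: nat
  assumes "1 \<le> k" "k \<le> m" "0 < dl" "real m * dl \<le> 1/3" "0 \<le> c"
  shows "potential c dl m n - potential c dl k n \<le> c * ln (real m / real k) / ln (1 / (real m * dl))"
proof -
  define x where "x = 1 / (real m * dl)"
  define y where "y = 1 / (real k * dl)"
  have x: "1 < x" "x \<le> y"
    using assms by (simp_all add: x_def y_def le_divide_eq frac_le)
  have "potential c dl m n - potential c dl k n \<le> c * (ln (ln y) - ln (ln x))"
    unfolding potential_def x_def[symmetric] y_def[symmetric] right_diff_distrib[symmetric]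
    using ln_ln_mono[OF x] assms(5) by (intro mult_left_mono) (auto simp: max_def)
  also have "\<dots> \<le> c * (ln (y / x) / ln x)"
    using ln_ln_diff_le[OF x] assms(5) by (intro mult_left_mono)
  also have "y / x = real m / real k"
    using assms by (simp add: x_def y_def)
  finally show ?thesis
    by (simp add: x_def)
qed

text \<open>The potential grows only once 1 / (n + 4) < m * dl, and then by at most 2 * c * m * dl; a
  single threshold (m = 1) never grows since dl \<le> 1 / (n + 4).\<close>
lemma potential_Suc_le:
  fixes m n :: nat
  assumes "1 \<le> m" "0 < dl" "real m * dl \<le> 1/3" "dl \<le> 1 / (real n + 4)" "0 \<le> c"
  shows "potential c dl m (Suc n) - potential c dl m n \<le> 4 * c * (real m - 1) * dl"
proof (cases "ln (ln (real n + 4)) \<le> ln (ln (1 / (real m * dl)))")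
  case True
  then have "potential c dl m (Suc n) = 0"
    by (simp add: potential_def add.commute)
  moreover have "0 \<le> 4 * c * (real m - 1) * dl"
    using assms by simp
  ultimately show ?thesis
    using potential_nonneg[OF assms(5), of dl m n] by linarith
next
  case False
  then have "1 / (real m * dl) < real n + 4"
    using assms by (smt (verit) ln_ln_mono le_divide_eq_1_pos mult_pos_pos of_nat_0_le_iff)
  then have wide: "1 < (real n + 4) * (real m * dl)"
    using assms by (simp add: divide_less_eq)
  have "2 \<le> m"
  proof (rule ccontr)
    assume "\<not> 2 \<le> m"
    then have "m = 1" using assms(1) by simp
    then show False
      using wide assms(2,4) by (simp add: le_divide_eq field_simps)
  qed
  have n3: "1 < real n + 3" by simp
  have max_step: "max 0 (b - h) - max 0 (a - h) \<le> b - a" if "a \<le> b" for a b h :: real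
    using that by (simp add: max_def)
  have "potential c dl m (Suc n) - potential c dl m n \<le>
      c * (ln (ln (real n + 3 + 1)) - ln (ln (real n + 3)))"
    unfolding potential_def right_diff_distrib[symmetric]
    using assms(5) max_step[OF ln_ln_mono[OF n3]] by (intro mult_left_mono) (simp_all add: add.commute)
  also have "\<dots> \<le> c * (1 / (real n + 3))"
    using ln_ln_add_one_diff_le[of "real n + 3"] assms(5) by (intro mult_left_mono) auto
  also have "\<dots> \<le> c * (2 * (real m * dl))"
  proof -
    have "1 / (real n + 3) \<le> 2 / (real n + 4)"
      by (simp add: field_simps)
    also have "\<dots> < 2 * (real m * dl)"
      using wide by (simp add: field_simps)
    finally show ?thesis
      using assms(5) by (intro mult_left_mono) auto
  qed
  also have "\<dots> \<le> 4 * c * (real m - 1) * dl"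
    using \<open>2 \<le> m\<close> assms(2,5) by (simp add: algebra_simps mult_left_mono)
  finally show ?thesis .
qed

lemma lower_block_potential_drop:
  fixes p q :: nat
  assumes "1 \<le> p" "0 < dl" "real (p + q) * dl \<le> 1/3" "0 \<le> c"
  shows "real p * (potential c dl (p + q) n - potential c dl p n) \<le> c * real q"
proof -
  define r where "r = real (p + q) / real p"
  define L where "L = ln (1 / (real (p + q) * dl))"
  have r: "1 \<le> r"
    using assms(1) by (simp add: r_def le_divide_eq)
  have L: "1 \<le> L"
    unfolding L_def using assms by (intro one_le_ln_inverse) auto
  have nonneg: "0 \<le> c * ln r"
    using r assms(4) by simp
  have "potential c dl (p + q) n - potential c dl p n \<le> c * ln r / L"
    using potential_diff_le[of p "p + q" dl c n] assms by (simp add: r_def L_def)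
  also have "\<dots> \<le> c * ln r"
    using L nonneg by (simp add: divide_le_eq mult_le_cancel_left1)
  also have "\<dots> \<le> c * (r - 1)"
    using r assms(4) by (intro mult_left_mono ln_le_minus_one) auto
  finally have "real p * (potential c dl (p + q) n - potential c dl p n) \<le> real p * (c * (r - 1))"
    by (intro mult_left_mono) auto
  also have "\<dots> = c * real q"
    using assms(1) by (simp add: r_def field_simps)
  finally show ?thesis .
qed

lemma mult_ln_ratio_le_sqrt:
  fixes q m :: real
  assumes "0 < q" "q \<le> m"
  shows "q * ln (m / q) \<le> sqrt (q * m)"
proof -
  have "q * ln (m / q) \<le> q * sqrt (m / q)"
    using assms by (intro mult_left_mono ln_le_sqrt) auto
  also have "q * sqrt (m / q) = sqrt (q * m)"
    using assms by (simp add: real_sqrt_divide real_sqrt_mult field_simps)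
  finally show ?thesis .
qed

lemma small_part_square_le:
  fixes p q :: nat
  assumes "1 \<le> q" "27 * real q < real (p + q)"
  shows "real (p + q) * real (p + q) \<le> 2 * (real p * (real p - 1))"
proof -
  define m where "m = real (p + q)"
  have "27 < m" and p: "26 * m < 27 * real p"
    using assms by (simp_all add: m_def)
  then have "m * (9/10) \<le> real p - 1" "m * (9/10) \<le> real p"
    by linarith+
  then have "(m * (9/10)) * (m * (9/10)) \<le> real p * (real p - 1)"
    using \<open>27 < m\<close> by (intro mult_mono) auto
  moreover have "(m * (9/10)) * (m * (9/10)) = 81/100 * (m * m)"
    by (simp add: algebra_simps)
  moreover have "0 \<le> m * m"
    by simp
  ultimately show ?thesis
    unfolding m_def[symmetric] by linarith
qed

lemma small_block_log_ratio_le: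
  fixes p q :: nat
  assumes q: "1 \<le> q" and w: "w = real (p + q) * dl" "0 < w" "w \<le> 1/3"
    and small: "real q < real (p + q) * w ^ 3" and c: "0 < c" "c \<le> 1/8"
  shows "c * (real q * ln (real (p + q) / real q)) \<le> real p * (real p - 1) * dl / 4"
proof -
  define m where "m = real (p + q)"
  have ratio: "real q \<le> m"
    by (simp add: m_def)
  have dl: "0 < dl"
    using w q by (simp add: zero_less_mult_iff)
  have "w ^ 3 \<le> (1/3) ^ 3"
    using w by (intro power_mono) auto
  then have "m * w ^ 3 \<le> m * (1/3) ^ 3"
    by (intro mult_left_mono) (simp_all add: m_def)
  then have "27 * real q < m"
    using small by (simp add: m_def power_divide)
  then have quadratic: "m * m \<le> 2 * (real p * (real p - 1))"
    using small_part_square_le[OF q] by (simp add: m_def)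
  have "w ^ 3 \<le> w ^ 2"
    using w by (intro power_decreasing) auto
  then have "m * w ^ 3 \<le> m * w ^ 2"
    by (intro mult_left_mono) (simp_all add: m_def)
  then have "real q * m \<le> (m * w ^ 2) * m"
    using small by (intro mult_right_mono) (simp_all add: m_def)
  then have "sqrt (real q * m) \<le> sqrt ((m * w) ^ 2)"
    by (intro real_sqrt_le_mono) (simp add: power2_eq_square algebra_simps)
  also have "\<dots> = m * w"
    using w by (simp add: m_def)
  finally have sqrt_le: "sqrt (real q * m) \<le> m * w" .
  have "c * (real q * ln (m / real q)) \<le> c * sqrt (real q * m)"
    using mult_ln_ratio_le_sqrt[of "real q" m] q ratio c by (intro mult_left_mono) auto
  also have "\<dots> \<le> c * (m * m * dl)"
    using sqrt_le c by (simp add: w m_def mult.assoc)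
  also have "\<dots> \<le> 1/8 * (m * m * dl)"
    using c dl by (intro mult_right_mono) auto
  also have "\<dots> \<le> 1/8 * (2 * (real p * (real p - 1)) * dl)"
    using quadratic dl by (intro mult_left_mono mult_right_mono) auto
  finally show ?thesis
    by (simp add: m_def algebra_simps)
qed

lemma upper_block_potential_drop:
  fixes p q :: nat
  assumes p: "1 \<le> p" and q: "1 \<le> q" and dl: "0 < dl" "real (p + q) * dl \<le> 1/3"
    and c: "0 < c" "c \<le> a / 6" "c \<le> 1/8"
  shows "real q * (potential c dl (p + q) n - potential c dl q n) \<le>
    real p * (real p - 1) * dl / 4 + real q * a / 2"
proof -
  define m where "m = real (p + q)"
  define w where "w = m * dl"
  define L where "L = ln (1 / w)"
  define D where "D = c * ln (m / real q) / L"
  have w: "0 < w" "w \<le> 1/3" and L: "1 \<le> L"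
    using p dl by (simp_all add: m_def w_def L_def one_le_ln_inverse)
  have ratio: "1 \<le> m / real q"
    using q by (simp add: m_def le_divide_eq)
  have drop: "real q * (potential c dl (p + q) n - potential c dl q n) \<le> real q * D"
    using potential_diff_le[of q "p + q" dl c n] q dl c by (intro mult_left_mono)
      (simp_all add: D_def m_def w_def L_def)
  have lower_part: "0 \<le> real p * (real p - 1) * dl / 4" "0 \<le> real q * a"
    using p dl c by simp_all
  show ?thesis
  proof (cases "D \<le> a / 2")
    case True
    then show ?thesis
      using drop lower_part mult_left_mono[OF True, of "real q"] by simp
  next
    case False
    text \<open>Then the upper block is so small that the drop is paid by the lower block alone.\<close>
    have "a / 2 < D" "0 < L"
      using False L by simp_all
    then have "a / 2 * L < c * ln (m / real q)"
      by (simp add: D_def less_divide_eq)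
    moreover have "(3 * c) * L \<le> a / 2 * L"
      using c L by (intro mult_right_mono) auto
    ultimately have "c * (3 * L) < c * ln (m / real q)"
      by (simp add: algebra_simps)
    then have "3 * L < ln (m / real q)"
      using c(1) by simp
    then have "ln (1 / w ^ 3) < ln (m / real q)"
      using w by (simp add: L_def ln_div ln_realpow)
    then have "1 / w ^ 3 < m / real q"
      using w ratio by (subst (asm) ln_less_cancel_iff) auto
    then have "real q < m * w ^ 3"
      using w q by (simp add: field_simps)
    then have "c * (real q * ln (m / real q)) \<le> real p * (real p - 1) * dl / 4"
      using small_block_log_ratio_le[OF q _ w] c by (simp add: m_def w_def)
    moreover have "real q * D \<le> c * (real q * ln (m / real q))"
      using L c ratio q by (simp add: D_def divide_le_eq mult_le_cancel_left1)
    ultimately show ?thesis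
      using drop lower_part by linarith
  qed
qed

lemma potential_growth_le:
  fixes p q :: nat
  assumes lam: "0 \<le> lam" "lam \<le> (real (p + q) - 1) * dl / 4" and nu: "0 \<le> nu" "nu \<le> 1"
    and dl: "0 < dl" "real (p + q) * dl \<le> a / 2"
  shows "real (p + q) * lam * nu \<le> real p * (real p - 1) * dl / 4 + real q * a / 4"
proof -
  define m where "m = real (p + q)"
  have "lam * nu \<le> (m - 1) * dl / 4"
    using lam nu mult_left_le[of nu lam] by (simp add: m_def)
  then have "m * (lam * nu) \<le> m * ((m - 1) * dl / 4)"
    by (intro mult_left_mono) (simp_all add: m_def)
  also have "\<dots> \<le> real p * (real p - 1) * dl / 4 + real q * (m * dl) / 2"
    using dl by (simp add: m_def field_simps)
  also have "\<dots> \<le> real p * (real p - 1) * dl / 4 + real q * (a / 2) / 2"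
    using dl by (intro add_left_mono divide_right_mono mult_left_mono) (auto simp: m_def)
  finally show ?thesis
    by (simp add: m_def mult.assoc)
qed

text \<open>A posterior nu splits a block of p + q thresholds into the p thresholds below nu, whose
  surrogate losses add up to A, and the q thresholds above nu, each losing nu. These losses pay for
  the drop of the potential caused by the split and for the growth lam * nu of the potential.\<close>
lemma potential_split_le:
  fixes p q :: nat
  assumes m: "1 \<le> p + q"
    and A: "real p * (real p - 1) * dl / 2 \<le> A"
    and nu: "0 \<le> nu" "nu \<le> 1" "0 < p \<Longrightarrow> 0 < q \<Longrightarrow> a \<le> nu"
    and lam: "0 \<le> lam" "lam \<le> (real (p + q) - 1) * dl / 4"
    and dl: "0 < dl" "real (p + q) * dl \<le> a / 2" "real (p + q) * dl \<le> 1/3"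
    and c: "0 < c" "c \<le> a / 6" "c \<le> 1/8"
  shows "real (p + q) * potential c dl (p + q) n + real (p + q) * lam * nu
         \<le> A + real q * nu + real p * potential c dl p n + real q * potential c dl q n"
proof -
  have growth: "real (p + q) * lam * nu \<le> real p * (real p - 1) * dl / 4 + real q * a / 4"
    by (rule potential_growth_le[OF lam nu(1,2) dl(1,2)])
  have "0 \<le> real p * (real p - 1)"
    by (cases p) auto
  then have "0 \<le> real p * (real p - 1) * dl"
    using dl(1) by simp
  then have A_nonneg: "0 \<le> A" "real p * (real p - 1) * dl / 4 \<le> A"
    using A by linarith+
  consider "p = 0" | "q = 0" | "1 \<le> p" "1 \<le> q"
    by linarith
  then show ?thesis
  proof cases
    case 1
    have "(real (p + q) - 1) * dl / 4 \<le> 1"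
      using dl m by (simp add: field_simps)
    then have "real q * (lam * nu) \<le> real q * nu"
      using lam nu by (intro mult_left_mono) (auto simp: mult_left_le_one_le)
    then show ?thesis
      using 1 A_nonneg by (simp add: algebra_simps)
  next
    case 2
    then show ?thesis
      using growth A_nonneg(2) by simp
  next
    case 3
    have "real p * (potential c dl (p + q) n - potential c dl p n) \<le> c * real q"
      using lower_block_potential_drop[of p dl q c n] 3 dl c by simp
    also have "\<dots> \<le> a / 6 * real q"
      using c by (intro mult_right_mono) auto
    finally have lower:
      "real p * potential c dl (p + q) n - real p * potential c dl p n \<le> real q * a / 6"
      by (simp add: right_diff_distrib mult.commute)
    have upper: "real q * potential c dl (p + q) n - real q * potential c dl q n
        \<le> real p * (real p - 1) * dl / 4 + real q * a / 2"
      using upper_block_potential_drop[of p q dl c a n] 3 dl c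
        unfolding right_diff_distrib[of "real q"] by simp
    have "real q * a \<le> real q * nu" "0 \<le> real q * a"
      using nu(3) 3 c by (simp_all add: mult_left_mono)
    moreover have "real (p + q) * potential c dl (p + q) n =
        real p * potential c dl (p + q) n + real q * potential c dl (p + q) n"
      by (simp add: algebra_simps)
    ultimately show ?thesis
      using growth lower upper A by linarith
  qed
qed

section \<open>Splitting blocks of thresholds\<close>

lemma downward_closed_split:
  fixes P :: "nat \<Rightarrow> bool"
  assumes down: "\<And>i j. i \<le> j \<Longrightarrow> P j \<Longrightarrow> P i" and "l \<le> r"
  obtains k where "l \<le> k" "k \<le> r" "\<And>i. l \<le> i \<Longrightarrow> i < r \<Longrightarrow> P i \<longleftrightarrow> i < k"
proof -
  define S where "S = insert r {i. l \<le> i \<and> i < r \<and> \<not> P i}"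
  define k where "k = Min S"
  have "finite S"
    unfolding S_def by (auto intro: finite_subset[of _ "{..<r}"])
  have "S \<noteq> {}"
    by (simp add: S_def)
  have S: "k \<in> S" "\<And>i. i \<in> S \<Longrightarrow> k \<le> i"
    unfolding k_def using \<open>finite S\<close> \<open>S \<noteq> {}\<close> by simp_all
  have "l \<le> k" "k \<le> r"
    using S \<open>l \<le> r\<close> by (auto simp: S_def)
  moreover have "P i \<longleftrightarrow> i < k" if "l \<le> i" "i < r" for i
  proof
    assume "P i"
    show "i < k"
    proof (rule ccontr)
      assume "\<not> i < k"
      with that S(1) have "\<not> P k" "k \<le> i"
        by (auto simp: S_def)
      with down \<open>P i\<close> show False
        by blast
    qed
  next
    assume "i < k"
    with that S(2)[of i] show "P i"
      by (auto simp: S_def)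
  qed
  ultimately show thesis
    by (rule that)
qed

lemma sum_gaps_below_ge:
  fixes x a dl :: real
  assumes "\<And>i. l \<le> i \<Longrightarrow> i < l + p \<Longrightarrow> a + real i * dl \<le> x"
  shows "real p * (real p - 1) * dl / 2 \<le> (\<Sum>i\<in>{l..<l + p}. x - (a + real i * dl))"
  using assms
proof (induction p arbitrary: l)
  case 0
  then show ?case by simp
next
  case (Suc p)
  have "real p * (real p - 1) * dl / 2 \<le> (\<Sum>i\<in>{Suc l..<Suc l + p}. x - (a + real i * dl))"
    using Suc.prems by (intro Suc.IH) auto
  moreover have "real p * dl \<le> x - (a + real l * dl)"
    using Suc.prems[of "l + p"] by (simp add: algebra_simps)
  moreover have "(\<Sum>i\<in>{l..<l + Suc p}. x - (a + real i * dl)) =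
      (x - (a + real l * dl)) + (\<Sum>i\<in>{Suc l..<Suc l + p}. x - (a + real i * dl))"
    by (simp add: sum.atLeast_Suc_lessThan)
  moreover have
    "real (Suc p) * (real (Suc p) - 1) * dl / 2 = real p * (real p - 1) * dl / 2 + real p * dl"
    by (simp add: field_simps)
  ultimately show ?case
    by linarith
qed

lemma sum_surrogate_loss_split:
  fixes J :: "bool \<Rightarrow> nat \<Rightarrow> real"
  assumes k: "l \<le> k" "k \<le> r" and below: "\<And>i. l \<le> i \<Longrightarrow> i < r \<Longrightarrow> th i \<le> nu \<longleftrightarrow> i < k"
  shows "(\<Sum>i\<in>{l..<r}. surrogate_loss (th i) nu + J (th i \<le> nu) i) =
    (\<Sum>i\<in>{l..<k}. nu - th i) + (\<Sum>i\<in>{l..<k}. J True i) + real (r - k) * nu + (\<Sum>i\<in>{k..<r}. J False i)"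
proof -
  have "(\<Sum>i\<in>{l..<k}. surrogate_loss (th i) nu + J (th i \<le> nu) i) =
      (\<Sum>i\<in>{l..<k}. (nu - th i) + J True i)"
    by (rule sum.cong) (use below k in \<open>auto simp: surrogate_loss_def\<close>)
  moreover have "(\<Sum>i\<in>{k..<r}. surrogate_loss (th i) nu + J (th i \<le> nu) i) =
      (\<Sum>i\<in>{k..<r}. nu + J False i)"
    by (rule sum.cong) (use below k in \<open>auto simp: surrogate_loss_def\<close>)
  moreover have "{l..<r} = {l..<k} \<union> {k..<r}"
    using k by auto
  ultimately show ?thesis
    by (simp add: sum.union_disjoint sum.distrib)
qed

text \<open>Here J b i stands for the loss of threshold i in the later rounds when the receiver took
  action b in the first one; the first action, and with it J, is the same for all thresholds on the
  same side of the posterior nu.\<close>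
lemma block_split_pointwise:
  fixes J :: "bool \<Rightarrow> nat \<Rightarrow> real"
  assumes "l < r" and nu: "0 \<le> nu" "nu \<le> 1"
    and blocks: "\<And>b i j. l \<le> i \<Longrightarrow> i < j \<Longrightarrow> j \<le> r \<Longrightarrow>
      real (j - i) * potential c dl (j - i) n \<le> (\<Sum>k\<in>{i..<j}. J b k)"
    and lam: "0 \<le> lam" "lam \<le> (real (r - l) - 1) * dl / 4"
    and dl: "0 < dl" "real (r - l) * dl \<le> qhat / 2" "real (r - l) * dl \<le> 1/3"
    and c: "0 < c" "c \<le> qhat / 6" "c \<le> 1/8"
  shows "real (r - l) * potential c dl (r - l) n + real (r - l) * lam * nu \<le>
    (\<Sum>i\<in>{l..<r}. surrogate_loss (qhat + real i * dl) nu + J (qhat + real i * dl \<le> nu) i)"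
proof -
  define th where "th i = qhat + real i * dl" for i
  have "th i \<le> nu" if "i \<le> j" "th j \<le> nu" for i j
  proof -
    have "real i * dl \<le> real j * dl"
      using that(1) dl(1) by (intro mult_right_mono) auto
    then show ?thesis
      using that(2) by (simp add: th_def)
  qed
  then obtain k where k: "l \<le> k" "k \<le> r"
    and below: "\<And>i. l \<le> i \<Longrightarrow> i < r \<Longrightarrow> th i \<le> nu \<longleftrightarrow> i < k"
    using downward_closed_split[of "\<lambda>i. th i \<le> nu" l r] \<open>l < r\<close> by (metis less_imp_le)
  define p q where "p = k - l" and "q = r - k"
  have m: "r - l = p + q"
    using k by (simp add: p_def q_def)
  have blocks': "real (j - i) * potential c dl (j - i) n \<le> (\<Sum>k\<in>{i..<j}. J b k)"
    if "l \<le> i" "i \<le> j" "j \<le> r" for b i j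
    using blocks[OF that(1) _ that(3)] that(2) by (cases "i = j") auto
  define A where "A = (\<Sum>i\<in>{l..<k}. nu - th i)"
  have "real (r - l) * potential c dl (r - l) n + real (r - l) * lam * nu
      \<le> A + real q * nu + real p * potential c dl p n + real q * potential c dl q n"
    unfolding m
  proof (rule potential_split_le[where a = qhat])
    show "real p * (real p - 1) * dl / 2 \<le> A"
      unfolding A_def th_def using sum_gaps_below_ge[of l p qhat dl nu] below k
      by (simp add: p_def th_def)
    assume "0 < p"
    then have "th l \<le> nu"
      using below[of l] \<open>l < r\<close> by (simp add: p_def)
    moreover have "qhat \<le> th l"
      using dl(1) by (simp add: th_def)
    ultimately show "qhat \<le> nu"
      by simp
  qed (use \<open>l < r\<close> m nu lam[unfolded m] dl[unfolded m] c in simp_all)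
  also have "\<dots> \<le> A + (\<Sum>i\<in>{l..<k}. J True i) + real q * nu + (\<Sum>i\<in>{k..<r}. J False i)"
    using blocks'[OF order_refl k, of True] blocks'[OF k order_refl, of False]
    unfolding p_def q_def by linarith
  also have "\<dots> = (\<Sum>i\<in>{l..<r}. surrogate_loss (th i) nu + J (th i \<le> nu) i)"
    using sum_surrogate_loss_split[OF k below] by (simp add: A_def q_def)
  finally show ?thesis
    by (simp add: th_def)
qed

lemma threshold_in_range:
  assumes "0 < dl" "i \<le> N" "qhat + real N * dl \<le> 1"
  shows "qhat \<le> qhat + real i * dl \<and> qhat + real i * dl \<le> 1"
proof -
  have "0 \<le> real i * dl" "real i * dl \<le> real N * dl"
    using assms(1,2) by (auto intro: mult_right_mono)
  then show ?thesis
    using assms(3) by linarith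
qed

lemma block_potential_le_cumulative_surrogate_loss:
  assumes mu0: "0 < mu0" "mu0 < qhat"
    and dl: "0 < dl" "real N * dl \<le> qhat / 2" "real N * dl \<le> 1/3" "qhat + real N * dl \<le> 1"
    and c: "0 < c" "c \<le> qhat / 6" "c \<le> 1/8" "c \<le> mu0 / 16"
  shows "dl \<le> 1 / (real n + 3) \<Longrightarrow> valid_policy mu0 Pol \<Longrightarrow> l < r \<Longrightarrow> r \<le> N \<Longrightarrow>
    real (r - l) * potential c dl (r - l) n \<le>
    (\<Sum>i\<in>{l..<r}. cumulative_surrogate_loss mu0 qhat (threshold_bias mu0 qhat (qhat + real i * dl)) Pol
       (qhat + real i * dl) n)"
proof (induction n arbitrary: Pol l r)
  case 0
  have "real (r - l) * dl \<le> real N * dl"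
    using 0 dl(1) by (intro mult_right_mono) auto
  then have "real (r - l) * dl \<le> 1/3"
    using dl(3) by linarith
  then have "potential c dl (r - l) 0 = 0"
    using 0 dl(1) by (intro potential_0) auto
  then show ?case
    by (simp add: cumulative_surrogate_loss_def)
next
  case (Suc n)
  define th where "th i = qhat + real i * dl" for i
  define m where "m = r - l"
  define lam where "lam = (potential c dl m (Suc n) - potential c dl m n) / mu0"
  define G where "G s = (\<Sum>i\<in>{l..<r}. surrogate_loss_given_first_signal mu0 qhat (th i) Pol n s)" for s
  note valid = Suc.prems(2)
  have th: "qhat \<le> th i \<and> th i \<le> 1" if "i \<in> {l..<r}" for i
    unfolding th_def using threshold_in_range[OF dl(1) _ dl(4)] that Suc.prems(4) by simp
  have "real m * dl \<le> real N * dl" "1 \<le> m"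
    using Suc.prems(3,4) dl(1) by (auto simp: m_def intro: mult_right_mono)
  then have width: "real m * dl \<le> qhat / 2" "real m * dl \<le> 1/3" "1 \<le> m"
    using dl(2,3) by linarith+
  have lam: "0 \<le> lam" "lam \<le> (real m - 1) * dl / 4"
  proof -
    show "0 \<le> lam"
      using potential_mono[of c n "Suc n"] c mu0 by (simp add: lam_def)
    have "potential c dl m (Suc n) - potential c dl m n \<le> 4 * c * (real m - 1) * dl"
      using width dl(1) c(1) Suc.prems(1) by (intro potential_Suc_le) (auto simp: add.commute)
    also have "\<dots> = (4 * c) * ((real m - 1) * dl)"
      by (simp add: mult.assoc)
    also have "\<dots> \<le> (mu0 / 4) * ((real m - 1) * dl)"
      using c width(3) dl(1) by (intro mult_right_mono) auto
    finally show "lam \<le> (real m - 1) * dl / 4"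
      using mu0 by (simp add: lam_def divide_le_eq mult.commute)
  qed
  have G_bounds: "\<bar>G s\<bar> \<le> real m * (real n + 1)" if "s \<in> set_pmf (first_signal Pol)" for s
  proof -
    have "0 \<le> surrogate_loss_given_first_signal mu0 qhat (th i) Pol n s \<and>
        surrogate_loss_given_first_signal mu0 qhat (th i) Pol n s \<le> real n + 1" if "i \<in> {l..<r}" for i
      using surrogate_loss_given_first_signal_bounds[OF valid _ _ \<open>s \<in> _\<close>] th[OF that] mu0 by simp
    then have "0 \<le> G s" "G s \<le> (\<Sum>i\<in>{l..<r}. real n + 1)"
      unfolding G_def by (meson sum_nonneg, meson sum_mono)
    then show ?thesis
      by (simp add: m_def)
  qed
  have pointwise: "real m * potential c dl m n + real m * lam * nu \<le> G (tau, omega, nu)"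
    if "(tau, omega, nu) \<in> set_pmf (first_signal Pol)" for tau omega nu
  proof -
    have "dl \<le> 1 / (real n + 3)"
      using Suc.prems(1) by (simp add: frac_le order_trans)
    then have "real (j - i) * potential c dl (j - i) n \<le> (\<Sum>k\<in>{i..<j}. cumulative_surrogate_loss mu0 qhat
        (threshold_bias mu0 qhat (th k)) (policy_after Pol (tau, omega, nu, b)) (th k) n)"
      if "l \<le> i" "i < j" "j \<le> r" for b i j
      using Suc.IH[OF _ valid_policy_after[OF valid] that(2)] that(3) Suc.prems(4) by (simp add: th_def)
    then show ?thesis
      unfolding m_def G_def surrogate_loss_given_first_signal_def th_def prod.case
      using first_signal_posterior_in_unit[OF valid that] Suc.prems(3) lam width dl(1) c
      by (intro block_split_pointwise) (simp_all add: m_def)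
  qed
  have "real m * potential c dl m (Suc n) = real m * potential c dl m n + real m * lam * mu0"
    using mu0 by (simp add: lam_def field_simps)
  also have "\<dots> \<le> measure_pmf.expectation (first_signal Pol) G"
    by (rule expectation_first_signal_ge_linear[OF valid pointwise G_bounds])
  also have "\<dots> = (\<Sum>i\<in>{l..<r}.
      cumulative_surrogate_loss mu0 qhat (threshold_bias mu0 qhat (th i)) Pol (th i) (Suc n))"
    unfolding G_def using sum_cumulative_surrogate_loss_Suc[OF valid mu0, of "{l..<r}" th n] th by simp
  finally show ?case
    by (simp add: m_def th_def)
qed

lemma exists_ge_average:
  fixes f :: "'a \<Rightarrow> real"
  assumes "finite A" "A \<noteq> {}" "real (card A) * x \<le> sum f A"
  obtains a where "a \<in> A" "x \<le> f a"
proof (rule ccontr)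
  assume "\<not> thesis"
  with that have "\<And>a. a \<in> A \<Longrightarrow> f a < x"
    by force
  then have "sum f A < (\<Sum>a\<in>A. x)"
    using assms(1,2) by (intro sum_strict_mono) auto
  with assms(3) show False
    by simp
qed

lemma exists_bias_regret_ge_potential:
  assumes mu0: "0 < mu0" "mu0 < qhat" and valid: "valid_policy mu0 Pol"
    and w: "0 < w" "w \<le> qhat / 2" "w \<le> 1/3" "qhat + w \<le> 1"
    and c: "0 < c" "c \<le> qhat / 6" "c \<le> 1/8" "c \<le> mu0 / 16"
  shows "\<exists>alpha\<in>{0..1}. potential c (w / real (T + 3)) (T + 3) T \<le> regret mu0 qhat T Pol alpha"
proof -
  define N where "N = T + 3"
  define dl where "dl = w / real N"
  have N_dl: "real N * dl = w"
    by (simp add: N_def dl_def)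
  have dl: "0 < dl" "real N * dl \<le> qhat / 2" "real N * dl \<le> 1/3" "qhat + real N * dl \<le> 1"
    using w N_dl by (simp_all add: dl_def N_def)
  have "dl \<le> 1 / (real T + 3)"
    using w by (simp add: dl_def N_def divide_right_mono)
  from block_potential_le_cumulative_surrogate_loss[OF mu0 dl c this valid, of 0 N]
  have "real (card {0..<N}) * potential c dl N T \<le>
      (\<Sum>i\<in>{0..<N}. cumulative_surrogate_loss mu0 qhat (threshold_bias mu0 qhat (qhat + real i * dl)) Pol
        (qhat + real i * dl) T)"
    by (simp add: N_def)
  then obtain i where "i \<in> {0..<N}" and i: "potential c dl N T \<le> cumulative_surrogate_loss mu0 qhat
      (threshold_bias mu0 qhat (qhat + real i * dl)) Pol (qhat + real i * dl) T"
    by (rule exists_ge_average[rotated 2]) (simp_all add: N_def)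
  have th: "qhat \<le> qhat + real i * dl" "qhat + real i * dl \<le> 1"
    using threshold_in_range[OF dl(1) _ dl(4), of i] \<open>i \<in> {0..<N}\<close> by simp_all
  show ?thesis
  proof
    show "threshold_bias mu0 qhat (qhat + real i * dl) \<in> {0..1}"
      by (rule threshold_bias_in_unit[OF mu0(2) th(1)])
    show "potential c (w / real (T + 3)) (T + 3) T \<le>
        regret mu0 qhat T Pol (threshold_bias mu0 qhat (qhat + real i * dl))"
      using i regret_ge_cumulative_surrogate_loss[OF mu0 th valid, of T] by (simp add: N_def dl_def)
  qed
qed

lemma potential_ge_half_ln_ln:
  assumes c: "0 < c" and w: "0 < w" "w \<le> 1/3" and T: "exp (ln (1 / w) ^ 2) \<le> real T"
  shows "c / 2 * ln (ln (real T)) \<le> potential c (w / real (T + 3)) (T + 3) T"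
proof -
  define L where "L = ln (1 / w)"
  have L: "1 \<le> L"
    unfolding L_def using w by (rule one_le_ln_inverse)
  have "0 < real T"
    using exp_gt_zero[of "L ^ 2"] T unfolding L_def by linarith
  then have "ln (exp (L ^ 2)) \<le> ln (real T)"
    using T unfolding L_def by (subst ln_le_cancel_iff) auto
  then have "L ^ 2 \<le> ln (real T)"
    by simp
  moreover have "1 \<le> L ^ 2"
    using L by (simp add: one_le_power)
  ultimately have "ln (L ^ 2) \<le> ln (ln (real T))"
    by (subst ln_le_cancel_iff) linarith+
  then have "2 * ln L \<le> ln (ln (real T))"
    using L by (simp add: ln_realpow)
  moreover have "ln (ln (real T)) \<le> ln (ln (real T + 3))"
  proof (rule ln_ln_mono)
    have "1 < exp (L ^ 2)"
      using L by simp
    then show "1 < real T"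
      using T unfolding L_def by linarith
  qed simp
  ultimately have "ln (ln (real T)) / 2 \<le> ln (ln (real T + 3)) - ln L"
    by linarith
  then have "c / 2 * ln (ln (real T)) \<le> c * (ln (ln (real T + 3)) - ln L)"
    using mult_left_mono[of _ _ c] c by fastforce
  also have "\<dots> \<le> potential c (w / real (T + 3)) (T + 3) T"
    using c by (simp add: potential_def L_def)
  finally show ?thesis .
qed

theorem theorem3p3:
  fixes mu0 qhat :: real
  assumes "0 < mu0" and "mu0 < 1" and "mu0 < qhat" and "qhat < 1"
  shows "\<exists>c > 0. \<exists>T0 :: nat. \<forall>T \<ge> T0. \<forall>Pol :: policy. valid_policy mu0 Pol \<longrightarrow>
           (SUP alpha \<in> {0..1}. regret mu0 qhat T Pol alpha) \<ge> c * ln (ln (real T))"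
proof -
  define w where "w = min (1 - qhat) (min (qhat / 2) (1 / 3))"
  define c where "c = min (min (qhat / 6) (1 / 8)) (mu0 / 16)"
  define T0 where "T0 = nat \<lceil>exp (ln (1 / w) ^ 2)\<rceil>"
  have w: "0 < w" "w \<le> qhat / 2" "w \<le> 1/3" "qhat + w \<le> 1"
    using assms unfolding w_def by (simp_all add: min_def)
  have c: "0 < c" "c \<le> qhat / 6" "c \<le> 1/8" "c \<le> mu0 / 16"
    using assms by (auto simp: c_def)
  have "c / 2 * ln (ln (real T)) \<le> (SUP alpha \<in> {0..1}. regret mu0 qhat T Pol alpha)"
    if T: "T0 \<le> T" and valid: "valid_policy mu0 Pol" for T Pol
  proof -
    obtain alpha where "alpha \<in> {0..1}"
      and "potential c (w / real (T + 3)) (T + 3) T \<le> regret mu0 qhat T Pol alpha"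
      using exists_bias_regret_ge_potential[OF assms(1,3) valid w c, where T = T] by blast
    moreover have "bdd_above (regret mu0 qhat T Pol ` {0..1})"
      using regret_le[of mu0] assms by (intro bdd_aboveI) auto
    moreover have "exp (ln (1 / w) ^ 2) \<le> real T"
      using T real_nat_ceiling_ge[of "exp (ln (1 / w) ^ 2)"] by (simp add: T0_def)
    ultimately show ?thesis
      using potential_ge_half_ln_ln[OF c(1) w(1,3)] by (meson cSUP_upper order_trans)
  qed
  then show ?thesis
    using c(1) by (intro exI[of _ "c / 2"] conjI exI[of _ T0]) auto
qed

end
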